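(* In the hexagonal three-direction setting with the random model described in the context, let $k\ge0$, let $R_b=\{r\in R: X_r=0\}$ be the set of rays with nonzero measurement, and let $C_b=\mathcal N(R_b)\setminus\mathcal N(R\setminus R_b)$ (equivalently, the set of cells none of whose three rays is a zero measurement). Then the expected number $N_C^0(k):=|C|-\mathbb{E}[|C_b|]$ of cells recognized as empty satisfies \[ N_C^0(k)=3N_C^1-3N_C^2+N_C^3, \] where \[ N_C^1=\sum_{r\in R_i}|r|\Big(1-\frac{|r|}{|C|}\Big)^k\quad\text{for any } i\in\{1,2,3\}, \] \[ N_C^2=\sum_{r_i\in R_i}\ \sum_{r_j\in R_j(r_i)}\Big(1-\frac{|r_i|+|r_j|-1}{|C|}\Big)^k\quad\text{for any } i\neq j\in\{1,2,3\}, \] \[ N_C^3=\sum_{c\in C}\Big(1-\frac{|r_1(c)|+|r_2(c)|+|r_3(c)|-2}{|C|}\Big)^k, \] and $R_j(r_i)$ denotes the set of rays in $R_j$ intersecting the ray $r_i$ (these quantities do not depend on the choice of $i$, resp. of $i\ne j$).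
   Context: Hexagonal setting. Let $d\ge 3$ be an odd integer. The set of cells is $C=\{(i_1,i_2)\in\mathbb{Z}^2 : |i_1|\le (d-1)/2,\ |i_2|\le (d-1)/2,\ |i_1+i_2|\le (d-1)/2\}$ (the cell centers are $i_1 d^1+i_2 d^2$ with $d^1=\tfrac12(\sqrt3,1)$, $d^2=(0,1)$, forming a hexagon), so $|C|=(3d^2+1)/4$. There are three directions of projection rays: $R_1$ consists of the $d$ rays $\{(i_1,i_2)\in C: i_1=a\}$, $R_2$ of the $d$ rays $\{(i_1,i_2)\in C: i_2=a\}$, and $R_3$ of the $d$ rays $\{(i_1,i_2)\in C: i_1+i_2=a\}$, for $a\in\{-(d-1)/2,\dots,(d-1)/2\}$; a ray is identified with the set of cells it meets, $|r|$ denotes its number of cells, and $R=R_1\cup R_2\cup R_3$, $|R|=3d$. Each cell $c$ lies on exactly one ray $r_i(c)\in R_i$ for each $i=1,2,3$. Random model: $k$ cells are drawn independently and uniformly from $C$ (with replacement; a cell may be drawn several times). For $r\in R$, $X_r\in\{0,1\}$ equals $1$ (a "zero measurement") iff none of the drawn cells lies on $r$. For a set $S$ of rays, $\mathcal N(S)$ is the set of cells lying on at least one ray of $S$. *)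

theory Defs
  imports "HOL-Probability.Probability"
begin

type_synonym cell = "int \<times> int"

definition hrad :: "nat \<Rightarrow> int" where
  "hrad d = (int d - 1) div 2"

definition hexC :: "nat \<Rightarrow> cell set" where
  "hexC d = {(i1, i2). \<bar>i1\<bar> \<le> hrad d \<and> \<bar>i2\<bar> \<le> hrad d \<and> \<bar>i1 + i2\<bar> \<le> hrad d}"

definition dircoord :: "nat \<Rightarrow> cell \<Rightarrow> int" where
  "dircoord i c = (if i = 1 then fst c else if i = 2 then snd c else fst c + snd c)"

text \<open>The ray of direction i with parameter a, identified with the set of cells it meets.\<close>
definition ray :: "nat \<Rightarrow> nat \<Rightarrow> int \<Rightarrow> cell set" where
  "ray d i a = {c \<in> hexC d. dircoord i c = a}"

definition raysDir :: "nat \<Rightarrow> nat \<Rightarrow> cell set set" where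
  "raysDir d i = {ray d i a | a. \<bar>a\<bar> \<le> hrad d}"

definition allRays :: "nat \<Rightarrow> cell set set" where
  "allRays d = raysDir d 1 \<union> raysDir d 2 \<union> raysDir d 3"

definition rayOf :: "nat \<Rightarrow> nat \<Rightarrow> cell \<Rightarrow> cell set" where
  "rayOf d i c = ray d i (dircoord i c)"

definition raysMeeting :: "nat \<Rightarrow> nat \<Rightarrow> cell set \<Rightarrow> cell set set" where
  "raysMeeting d j r = {r' \<in> raysDir d j. r' \<inter> r \<noteq> {}}"

definition nbhd :: "nat \<Rightarrow> cell set set \<Rightarrow> cell set" where
  "nbhd d S = {c \<in> hexC d. \<exists>r\<in>S. c \<in> r}"

text \<open>A draw of k cells is a function from {..<k} to cells. X_r = 1 (zero measurement)
  iff no drawn cell lies on r.\<close>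
definition zeroMeas :: "nat \<Rightarrow> (nat \<Rightarrow> cell) \<Rightarrow> cell set \<Rightarrow> bool" where
  "zeroMeas k draw r \<longleftrightarrow> (\<forall>t<k. draw t \<notin> r)"

definition Rb :: "nat \<Rightarrow> nat \<Rightarrow> (nat \<Rightarrow> cell) \<Rightarrow> cell set set" where
  "Rb d k draw = {r \<in> allRays d. \<not> zeroMeas k draw r}"

definition Cb :: "nat \<Rightarrow> nat \<Rightarrow> (nat \<Rightarrow> cell) \<Rightarrow> cell set" where
  "Cb d k draw = nbhd d (Rb d k draw) - nbhd d (allRays d - Rb d k draw)"

definition drawPmf :: "nat \<Rightarrow> nat \<Rightarrow> (nat \<Rightarrow> cell) pmf" where
  "drawPmf d k = Pi_pmf {..<k} undefined (\<lambda>_. pmf_of_set (hexC d))"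

definition NC0 :: "nat \<Rightarrow> nat \<Rightarrow> real" where
  "NC0 d k = real (card (hexC d))
     - measure_pmf.expectation (drawPmf d k) (\<lambda>draw. real (card (Cb d k draw)))"

definition NC1 :: "nat \<Rightarrow> nat \<Rightarrow> nat \<Rightarrow> real" where
  "NC1 d k i = (\<Sum>r\<in>raysDir d i. real (card r) * (1 - real (card r) / real (card (hexC d))) ^ k)"

definition NC2 :: "nat \<Rightarrow> nat \<Rightarrow> nat \<Rightarrow> nat \<Rightarrow> real" where
  "NC2 d k i j = (\<Sum>ri\<in>raysDir d i. \<Sum>rj\<in>raysMeeting d j ri.
      (1 - (real (card ri) + real (card rj) - 1) / real (card (hexC d))) ^ k)"

definition NC3 :: "nat \<Rightarrow> nat \<Rightarrow> real" where
  "NC3 d k = (\<Sum>c\<in>hexC d.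
      (1 - (real (card (rayOf d 1 c)) + real (card (rayOf d 2 c)) + real (card (rayOf d 3 c)) - 2)
            / real (card (hexC d))) ^ k)"

end

theory Submission
  imports Defs
begin

(* A cell c of the hexagon fails to lie in C_b exactly when one of the three
   rays r_1(c), r_2(c), r_3(c) through it carries a zero measurement, i.e. when the k draws
   avoid that ray.  Two rays of different directions through c meet only in c, and k
   independent uniform draws avoid a set S of cells with probability (1 - |S|/|C|)^k.
   Inclusion-exclusion over the three events and linearity of expectation therefore give

     N_C^0 = sum over c of [ sum_i q(|r_i(c)|) - sum_{i<j} q(|r_i(c)|+|r_j(c)|-1)
                             + q(|r_1(c)|+|r_2(c)|+|r_3(c)|-2) ],   q(x) = (1 - x/|C|)^k.

   Grouping the cells of C by the ray of direction i through them shows that N_C^1(i) and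
   N_C^2(i,j) are exactly the single and pair sums above.  Finally three involutions of the
   hexagon (reflections permuting the directions) show that these sums do not depend on the
   direction(s) chosen, which turns the seven terms into 3 N_C^1 - 3 N_C^2 + N_C^3. *)


lemma dircoord_bound: "c \<in> hexC d \<Longrightarrow> \<bar>dircoord i c\<bar> \<le> hrad d"
  by (cases c) (auto simp: hexC_def dircoord_def)

lemma dircoords_determine_cell:
  assumes "i \<in> {1,2,3}" "j \<in> {1,2,3::nat}" "i \<noteq> j"
    and "dircoord i e = dircoord i c" "dircoord j e = dircoord j c"
  shows "e = c"
  using assms by (cases e; cases c) (auto simp: dircoord_def)

lemma finite_hexC: "finite (hexC d)"
proof -
  have "hexC d \<subseteq> {-hrad d..hrad d} \<times> {-hrad d..hrad d}"
    by (auto simp: hexC_def)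
  then show ?thesis
    by (rule finite_subset) auto
qed

lemma hexC_nonempty: "d \<ge> 1 \<Longrightarrow> hexC d \<noteq> {}"
proof -
  assume "d \<ge> 1"
  then have "(0, 0) \<in> hexC d"
    by (auto simp: hexC_def hrad_def)
  then show ?thesis by blast
qed

lemma cell_in_rayOf: "c \<in> hexC d \<Longrightarrow> c \<in> rayOf d i c"
  by (simp add: rayOf_def ray_def)

lemma rayOf_subset: "rayOf d i c \<subseteq> hexC d"
  by (auto simp: rayOf_def ray_def)

lemma finite_rayOf: "finite (rayOf d i c)"
  using rayOf_subset finite_hexC by (rule finite_subset)

lemma rayOf_in_raysDir: "c \<in> hexC d \<Longrightarrow> rayOf d i c \<in> raysDir d i"
  unfolding raysDir_def rayOf_def using dircoord_bound by blast

lemma rayOf_eq: "r \<in> raysDir d i \<Longrightarrow> c \<in> r \<Longrightarrow> rayOf d i c = r"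
  by (auto simp: raysDir_def rayOf_def ray_def)

lemma rays_through_cell:
  assumes c: "c \<in> hexC d"
  shows "r \<in> allRays d \<and> c \<in> r \<longleftrightarrow> r = rayOf d 1 c \<or> r = rayOf d 2 c \<or> r = rayOf d 3 c"
  unfolding allRays_def
  using rayOf_eq rayOf_in_raysDir[OF c] cell_in_rayOf[OF c] by blast

lemma rayOf_inter:
  assumes c: "c \<in> hexC d" and ij: "i \<in> {1,2,3}" "j \<in> {1,2,3::nat}" "i \<noteq> j"
  shows "rayOf d i c \<inter> rayOf d j c = {c}"
proof
  show "rayOf d i c \<inter> rayOf d j c \<subseteq> {c}"
  proof
    fix e assume "e \<in> rayOf d i c \<inter> rayOf d j c"
    then have "dircoord i e = dircoord i c" "dircoord j e = dircoord j c"
      by (auto simp: rayOf_def ray_def)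
    then show "e \<in> {c}"
      using dircoords_determine_cell[OF ij] by simp
  qed
  show "{c} \<subseteq> rayOf d i c \<inter> rayOf d j c"
    using cell_in_rayOf[OF c] by blast
qed

text \<open>Sums over cells can be computed ray by ray, since each R_i partitions C.\<close>
lemma sum_cells_by_rays:
  "(\<Sum>c\<in>hexC d. g (rayOf d i c) c) = (\<Sum>r\<in>raysDir d i. \<Sum>c\<in>r. g r c)"
proof -
  have partition: "\<Union> (raysDir d i) = hexC d"
  proof
    show "\<Union> (raysDir d i) \<subseteq> hexC d"
      by (auto simp: raysDir_def ray_def)
    show "hexC d \<subseteq> \<Union> (raysDir d i)"
      using rayOf_in_raysDir cell_in_rayOf by blast
  qed
  have "(\<Sum>c\<in>hexC d. g (rayOf d i c) c) = (\<Sum>r\<in>raysDir d i. \<Sum>c\<in>r. g (rayOf d i c) c)"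
    unfolding partition[symmetric]
  proof (subst sum.Union_disjoint)
    show "\<forall>A\<in>raysDir d i. finite A"
      using finite_hexC by (auto simp: raysDir_def ray_def)
    show "\<forall>A\<in>raysDir d i. \<forall>B\<in>raysDir d i. A \<noteq> B \<longrightarrow> A \<inter> B = {}"
      by (auto simp: raysDir_def ray_def)
  qed simp
  also have "\<dots> = (\<Sum>r\<in>raysDir d i. \<Sum>c\<in>r. g r c)"
    by (intro sum.cong refl) (simp add: rayOf_eq)
  finally show ?thesis .
qed


definition rayLen :: "nat \<Rightarrow> nat \<Rightarrow> cell \<Rightarrow> real" where
  "rayLen d i c = real (card (rayOf d i c))"

text \<open>q(x) = (1 - x/|C|)^k, the probability that k uniform draws avoid a set of x cells.\<close>
definition avoidProb :: "nat \<Rightarrow> nat \<Rightarrow> real \<Rightarrow> real" where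
  "avoidProb d k x = (1 - x / real (card (hexC d))) ^ k"

lemma card_two_rays:
  assumes c: "c \<in> hexC d" and ij: "i \<in> {1,2,3}" "j \<in> {1,2,3::nat}" "i \<noteq> j"
  shows "real (card (rayOf d i c \<union> rayOf d j c)) = rayLen d i c + rayLen d j c - 1"
  using card_Un_Int[OF finite_rayOf finite_rayOf, of d i c d j c] rayOf_inter[OF c ij]
  by (simp add: rayLen_def)

lemma card_three_rays:
  assumes c: "c \<in> hexC d"
  shows "real (card (rayOf d 1 c \<union> rayOf d 2 c \<union> rayOf d 3 c))
           = rayLen d 1 c + rayLen d 2 c + rayLen d 3 c - 2"
proof -
  have meet: "(rayOf d 1 c \<union> rayOf d 2 c) \<inter> rayOf d 3 c = {c}"
    using rayOf_inter[OF c, of 1 3] rayOf_inter[OF c, of 2 3] by auto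
  have "card (rayOf d 1 c \<union> rayOf d 2 c) + card (rayOf d 3 c)
          = card (rayOf d 1 c \<union> rayOf d 2 c \<union> rayOf d 3 c) + 1"
    using card_Un_Int[of "rayOf d 1 c \<union> rayOf d 2 c" "rayOf d 3 c"] meet
    by (simp add: finite_rayOf)
  then show ?thesis
    using card_two_rays[OF c, of 1 2] by (simp add: rayLen_def)
qed

lemma prob_uniform_draws_avoid:
  assumes A: "finite A" "A \<noteq> {}" and S: "S \<subseteq> A"
  shows "measure_pmf.prob (Pi_pmf {..<k} dflt (\<lambda>_. pmf_of_set A)) {draw. zeroMeas k draw S}
           = (1 - real (card S) / real (card A)) ^ k"
proof -
  have "{draw. zeroMeas k draw S} = Pi {..<k} (\<lambda>_. - S)"
    by (auto simp: zeroMeas_def)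
  then have "measure_pmf.prob (Pi_pmf {..<k} dflt (\<lambda>_. pmf_of_set A)) {draw. zeroMeas k draw S}
      = (\<Prod>t\<in>{..<k}. measure_pmf.prob (pmf_of_set A) (- S))"
    by (simp add: measure_Pi_pmf_Pi)
  also have "measure_pmf.prob (pmf_of_set A) (- S) = real (card (A - S)) / real (card A)"
    using measure_pmf_of_set[OF A(2,1)] by (simp add: Diff_eq)
  also have "\<dots> = 1 - real (card S) / real (card A)"
    using A S by (simp add: card_Diff_subset finite_subset card_mono of_nat_diff
        diff_divide_distrib card_gt_0_iff)
  finally show ?thesis by simp
qed

lemma finite_support_drawPmf: "d \<ge> 1 \<Longrightarrow> finite (set_pmf (drawPmf d k))"
proof -
  assume "d \<ge> 1"
  have "set_pmf (drawPmf d k) \<subseteq> PiE_dflt {..<k} undefined (set_pmf \<circ> (\<lambda>_. pmf_of_set (hexC d)))"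
    unfolding drawPmf_def by (rule set_Pi_pmf_subset') simp
  moreover have "finite (PiE_dflt {..<k} undefined (set_pmf \<circ> (\<lambda>_. pmf_of_set (hexC d))))"
    using finite_hexC hexC_nonempty[OF \<open>d \<ge> 1\<close>] by (intro finite_PiE_dflt) auto
  ultimately show ?thesis by (rule finite_subset)
qed

lemma integrable_drawPmf: "d \<ge> 1 \<Longrightarrow> integrable (measure_pmf (drawPmf d k)) (f :: _ \<Rightarrow> real)"
  by (rule integrable_measure_pmf_finite[OF finite_support_drawPmf])

lemma expectation_avoid:
  assumes "d \<ge> 1" and "S \<subseteq> hexC d"
  shows "measure_pmf.expectation (drawPmf d k) (\<lambda>draw. of_bool (zeroMeas k draw S))
           = avoidProb d k (real (card S))"
proof -
  have "(\<lambda>draw. of_bool (zeroMeas k draw S) :: real) = indicator {draw. zeroMeas k draw S}"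
    by (auto simp: indicator_def)
  then show ?thesis
    using prob_uniform_draws_avoid[OF finite_hexC hexC_nonempty[OF assms(1)] assms(2)]
    by (simp add: drawPmf_def avoidProb_def)
qed


lemma of_bool_disj3:
  "(of_bool (P \<or> Q \<or> R) :: 'a :: ring_1) =
     of_bool P + of_bool Q + of_bool R - of_bool (P \<and> Q) - of_bool (P \<and> R) - of_bool (Q \<and> R)
     + of_bool (P \<and> Q \<and> R)"
  by (cases P; cases Q; cases R) simp_all

lemma zeroMeas_Un: "zeroMeas k draw (A \<union> B) \<longleftrightarrow> zeroMeas k draw A \<and> zeroMeas k draw B"
  by (auto simp: zeroMeas_def)

lemma not_in_Cb_iff:
  assumes c: "c \<in> hexC d"
  shows "c \<notin> Cb d k draw \<longleftrightarrow>
           zeroMeas k draw (rayOf d 1 c) \<or> zeroMeas k draw (rayOf d 2 c) \<or> zeroMeas k draw (rayOf d 3 c)"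
proof -
  have "c \<in> Cb d k draw \<longleftrightarrow> (\<exists>r. (r \<in> allRays d \<and> c \<in> r) \<and> \<not> zeroMeas k draw r) \<and>
          \<not> (\<exists>r. (r \<in> allRays d \<and> c \<in> r) \<and> zeroMeas k draw r)"
    unfolding Cb_def nbhd_def Rb_def using c by blast
  then show ?thesis
    unfolding rays_through_cell[OF c] by blast
qed

lemma expectation_not_in_Cb:
  assumes d: "d \<ge> 1" and c: "c \<in> hexC d"
  shows "measure_pmf.expectation (drawPmf d k) (\<lambda>draw. of_bool (c \<notin> Cb d k draw)) =
     avoidProb d k (rayLen d 1 c) + avoidProb d k (rayLen d 2 c) + avoidProb d k (rayLen d 3 c)
     - avoidProb d k (rayLen d 1 c + rayLen d 2 c - 1) - avoidProb d k (rayLen d 1 c + rayLen d 3 c - 1)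
     - avoidProb d k (rayLen d 2 c + rayLen d 3 c - 1)
     + avoidProb d k (rayLen d 1 c + rayLen d 2 c + rayLen d 3 c - 2)"
proof -
  let ?Z = "\<lambda>S draw. of_bool (zeroMeas k draw S) :: real"
  let ?r = "rayOf d"
  have "(\<lambda>draw. of_bool (c \<notin> Cb d k draw)) = (\<lambda>draw.
          ?Z (?r 1 c) draw + ?Z (?r 2 c) draw + ?Z (?r 3 c) draw
          - ?Z (?r 1 c \<union> ?r 2 c) draw - ?Z (?r 1 c \<union> ?r 3 c) draw - ?Z (?r 2 c \<union> ?r 3 c) draw
          + ?Z (?r 1 c \<union> ?r 2 c \<union> ?r 3 c) draw)"
    unfolding not_in_Cb_iff[OF c] of_bool_disj3 zeroMeas_Un by (simp add: conj_assoc)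
  moreover have "\<And>S. S \<subseteq> hexC d \<Longrightarrow> measure_pmf.expectation (drawPmf d k) (?Z S)
                   = avoidProb d k (real (card S))"
    by (rule expectation_avoid[OF d])
  moreover have "?r i c \<union> ?r j c \<subseteq> hexC d" "?r 1 c \<union> ?r 2 c \<union> ?r 3 c \<subseteq> hexC d" for i j
    using rayOf_subset by blast+
  ultimately show ?thesis
    using card_two_rays[OF c] card_three_rays[OF c] rayOf_subset
    by (simp add: integrable_drawPmf[OF d] rayLen_def)
qed

lemma NC0_as_cell_sum:
  assumes d: "d \<ge> 1"
  shows "NC0 d k = (\<Sum>c\<in>hexC d.
           measure_pmf.expectation (drawPmf d k) (\<lambda>draw. of_bool (c \<notin> Cb d k draw)))"
proof -
  have card_Cb: "real (card (Cb d k draw)) = real (card (hexC d)) - (\<Sum>c\<in>hexC d. of_bool (c \<notin> Cb d k draw))"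
    for draw
  proof -
    have sub: "Cb d k draw \<subseteq> hexC d"
      by (auto simp: Cb_def nbhd_def)
    have "(\<Sum>c\<in>hexC d. of_bool (c \<notin> Cb d k draw)) = real (card (hexC d - Cb d k draw))"
      using finite_hexC by (simp add: Diff_eq Int_def)
    also have "\<dots> = real (card (hexC d)) - real (card (Cb d k draw))"
      using sub finite_hexC by (simp add: card_Diff_subset finite_subset card_mono of_nat_diff)
    finally show ?thesis by simp
  qed
  show ?thesis
    unfolding NC0_def card_Cb
    by (simp add: integrable_drawPmf[OF d] Bochner_Integration.integral_sum)
qed


lemma NC3_as_cell_sum:
  "NC3 d k = (\<Sum>c\<in>hexC d. avoidProb d k (rayLen d 1 c + rayLen d 2 c + rayLen d 3 c - 2))"
  by (simp add: NC3_def avoidProb_def rayLen_def)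

lemma NC1_as_cell_sum: "NC1 d k i = (\<Sum>c\<in>hexC d. avoidProb d k (rayLen d i c))"
  unfolding NC1_def rayLen_def avoidProb_def
  by (subst sum_cells_by_rays[where g = "\<lambda>r c. (1 - real (card r) / real (card (hexC d))) ^ k"]) simp

lemma rayOf_bij_raysMeeting:
  assumes ij: "i \<in> {1,2,3}" "j \<in> {1,2,3::nat}" "i \<noteq> j" and ri: "ri \<in> raysDir d i"
  shows "bij_betw (rayOf d j) ri (raysMeeting d j ri)"
proof (rule bij_betw_imageI)
  have sub: "ri \<subseteq> hexC d"
    using ri by (auto simp: raysDir_def ray_def)
  show "inj_on (rayOf d j) ri"
  proof
    fix x y assume x: "x \<in> ri" and y: "y \<in> ri" and eq: "rayOf d j x = rayOf d j y"
    have "dircoord j x = dircoord j y"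
      using eq cell_in_rayOf[of x d j] x sub by (auto simp: rayOf_def ray_def)
    moreover have "dircoord i x = dircoord i y"
      using ri x y by (auto simp: raysDir_def ray_def)
    ultimately show "x = y"
      using dircoords_determine_cell[OF ij] by blast
  qed
  show "rayOf d j ` ri = raysMeeting d j ri"
  proof
    show "rayOf d j ` ri \<subseteq> raysMeeting d j ri"
      using sub cell_in_rayOf rayOf_in_raysDir unfolding raysMeeting_def by blast
    show "raysMeeting d j ri \<subseteq> rayOf d j ` ri"
      using rayOf_eq unfolding raysMeeting_def by blast
  qed
qed

lemma NC2_as_cell_sum:
  assumes ij: "i \<in> {1,2,3}" "j \<in> {1,2,3::nat}" "i \<noteq> j"
  shows "NC2 d k i j = (\<Sum>c\<in>hexC d. avoidProb d k (rayLen d i c + rayLen d j c - 1))"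
proof -
  let ?h = "\<lambda>ri rj. (1 - (real (card ri) + real (card rj) - 1) / real (card (hexC d))) ^ k"
  have "(\<Sum>c\<in>hexC d. avoidProb d k (rayLen d i c + rayLen d j c - 1))
      = (\<Sum>ri\<in>raysDir d i. \<Sum>c\<in>ri. ?h ri (rayOf d j c))"
    unfolding rayLen_def avoidProb_def
    by (subst sum_cells_by_rays[where g = "\<lambda>r c. ?h r (rayOf d j c)"]) simp
  also have "\<dots> = (\<Sum>ri\<in>raysDir d i. \<Sum>rj\<in>raysMeeting d j ri. ?h ri rj)"
    by (intro sum.cong refl sum.reindex_bij_betw rayOf_bij_raysMeeting[OF ij])
  finally show ?thesis
    unfolding NC2_def by simp
qed


lemma rayLen_involution:
  assumes inv: "\<And>c. \<phi> (\<phi> c) = c" and pres: "\<And>c. c \<in> hexC d \<Longrightarrow> \<phi> c \<in> hexC d"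
    and coord: "\<And>e. dircoord i (\<phi> e) = s * dircoord i' e" and s: "s \<noteq> 0"
  shows "rayLen d i (\<phi> c) = rayLen d i' c"
proof -
  have hex: "\<phi> e \<in> hexC d \<longleftrightarrow> e \<in> hexC d" for e
    using pres inv by metis
  have "rayOf d i (\<phi> c) = \<phi> ` rayOf d i' c"
  proof (rule set_eqI)
    fix e
    have "e \<in> rayOf d i (\<phi> c) \<longleftrightarrow> \<phi> e \<in> rayOf d i' c"
      using coord[of "\<phi> e"] coord[of c] s hex[of "\<phi> e"]
      by (simp add: rayOf_def ray_def inv)
    also have "\<dots> \<longleftrightarrow> e \<in> \<phi> ` rayOf d i' c"
      using inv by (metis image_iff)
    finally show "e \<in> rayOf d i (\<phi> c) \<longleftrightarrow> e \<in> \<phi> ` rayOf d i' c" .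
  qed
  moreover have "inj \<phi>"
    using inv by (metis injI)
  ultimately show ?thesis
    unfolding rayLen_def by (simp add: card_image inj_on_subset)
qed

lemma sum_hexC_involution:
  assumes inv: "\<And>c. \<phi> (\<phi> c) = c" and pres: "\<And>c. c \<in> hexC d \<Longrightarrow> \<phi> c \<in> hexC d"
  shows "(\<Sum>c\<in>hexC d. g (\<phi> c)) = (\<Sum>c\<in>hexC d. g c)"
  by (rule sum.reindex_bij_witness[where i = \<phi> and j = \<phi>]) (simp_all add: inv pres)

text \<open>Three reflections of the hexagon: swapping the coordinates exchanges directions 1 and 2,
  the other two exchange directions 1 and 3, resp. 2 and 3.\<close>
definition swap12 :: "cell \<Rightarrow> cell" where "swap12 = (\<lambda>(x, y). (y, x))"
definition swap13 :: "cell \<Rightarrow> cell" where "swap13 = (\<lambda>(x, y). (-(x + y), y))"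
definition swap23 :: "cell \<Rightarrow> cell" where "swap23 = (\<lambda>(x, y). (x, -(x + y)))"

lemma swap_involutions:
  "swap12 (swap12 c) = c" "swap13 (swap13 c) = c" "swap23 (swap23 c) = c"
  by (cases c; simp add: swap12_def swap13_def swap23_def)+

lemma swap_preserve_hexC:
  assumes "c \<in> hexC d"
  shows "swap12 c \<in> hexC d" "swap13 c \<in> hexC d" "swap23 c \<in> hexC d"
  using assms by (cases c; auto simp: swap12_def swap13_def swap23_def hexC_def)+

lemma rayLen_swaps:
  "rayLen d 1 (swap12 c) = rayLen d 2 c"
  "rayLen d 1 (swap13 c) = rayLen d 3 c" "rayLen d 2 (swap13 c) = rayLen d 2 c"
  "rayLen d 1 (swap23 c) = rayLen d 1 c" "rayLen d 2 (swap23 c) = rayLen d 3 c"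
  by (rule rayLen_involution[OF swap_involutions(1) swap_preserve_hexC(1), where s = 1]
        rayLen_involution[OF swap_involutions(2) swap_preserve_hexC(2), where s = "-1"]
        rayLen_involution[OF swap_involutions(2) swap_preserve_hexC(2), where s = 1]
        rayLen_involution[OF swap_involutions(3) swap_preserve_hexC(3), where s = 1]
        rayLen_involution[OF swap_involutions(3) swap_preserve_hexC(3), where s = "-1"];
      auto simp: swap12_def swap13_def swap23_def dircoord_def split: prod.splits)+

lemma NC1_independent:
  assumes "i \<in> {1,2,3::nat}"
  shows "NC1 d k i = NC1 d k 1"
proof -
  have "NC1 d k 2 = (\<Sum>c\<in>hexC d. avoidProb d k (rayLen d 1 (swap12 c)))"
    by (simp only: NC1_as_cell_sum rayLen_swaps)
  also have "\<dots> = NC1 d k 1"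
    unfolding NC1_as_cell_sum by (rule sum_hexC_involution[OF swap_involutions(1) swap_preserve_hexC(1)])
  finally have two: "NC1 d k 2 = NC1 d k 1" .
  have "NC1 d k 3 = (\<Sum>c\<in>hexC d. avoidProb d k (rayLen d 1 (swap13 c)))"
    by (simp only: NC1_as_cell_sum rayLen_swaps)
  also have "\<dots> = NC1 d k 1"
    unfolding NC1_as_cell_sum by (rule sum_hexC_involution[OF swap_involutions(2) swap_preserve_hexC(2)])
  finally have three: "NC1 d k 3 = NC1 d k 1" .
  show ?thesis
    using assms two three by auto
qed

lemma NC2_independent:
  assumes "i \<in> {1,2,3}" "j \<in> {1,2,3::nat}" "i \<noteq> j"
  shows "NC2 d k i j = NC2 d k 1 2"
proof -
  let ?pair = "\<lambda>i j. \<Sum>c\<in>hexC d. avoidProb d k (rayLen d i c + rayLen d j c - 1)"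
  have cells: "NC2 d k i' j' = ?pair i' j'" "NC2 d k j' i' = ?pair i' j'"
    if "(i', j') \<in> {(1, 2), (1, 3), (2, 3)}" for i' j'
    using that by (auto simp: NC2_as_cell_sum add.commute)
  have "?pair 1 3 = (\<Sum>c\<in>hexC d. avoidProb d k (rayLen d 1 (swap23 c) + rayLen d 2 (swap23 c) - 1))"
    by (simp only: rayLen_swaps)
  also have "\<dots> = ?pair 1 2"
    by (rule sum_hexC_involution[OF swap_involutions(3) swap_preserve_hexC(3)])
  finally have "?pair 1 3 = ?pair 1 2" .
  moreover have "?pair 2 3 = (\<Sum>c\<in>hexC d. avoidProb d k (rayLen d 1 (swap13 c) + rayLen d 2 (swap13 c) - 1))"
    by (simp only: rayLen_swaps add.commute)
  moreover have "\<dots> = ?pair 1 2"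
    by (rule sum_hexC_involution[OF swap_involutions(2) swap_preserve_hexC(2)])
  ultimately show ?thesis
    using assms cells[of 1 2] cells[of 1 3] cells[of 2 3] by auto
qed


lemma NC0_inclusion_exclusion:
  assumes d: "d \<ge> 1"
  shows "NC0 d k = NC1 d k 1 + NC1 d k 2 + NC1 d k 3
                   - NC2 d k 1 2 - NC2 d k 1 3 - NC2 d k 2 3 + NC3 d k"
proof -
  let ?q = "avoidProb d k" and ?L = "rayLen d"
  have pairs: "NC2 d k i j = (\<Sum>c\<in>hexC d. ?q (?L i c + ?L j c - 1))"
    if "(i, j) \<in> {(1, 2), (1, 3), (2, 3)}" for i j
    using that by (auto simp: NC2_as_cell_sum)
  have "NC0 d k = (\<Sum>c\<in>hexC d.
          ?q (?L 1 c) + ?q (?L 2 c) + ?q (?L 3 c)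
          - ?q (?L 1 c + ?L 2 c - 1) - ?q (?L 1 c + ?L 3 c - 1) - ?q (?L 2 c + ?L 3 c - 1)
          + ?q (?L 1 c + ?L 2 c + ?L 3 c - 2))"
    unfolding NC0_as_cell_sum[OF d] by (intro sum.cong refl expectation_not_in_Cb[OF d])
  also have "\<dots> = NC1 d k 1 + NC1 d k 2 + NC1 d k 3
                   - NC2 d k 1 2 - NC2 d k 1 3 - NC2 d k 2 3 + NC3 d k"
    using pairs[of 1 2] pairs[of 1 3] pairs[of 2 3]
    by (simp add: sum.distrib sum_subtractf NC1_as_cell_sum NC3_as_cell_sum)
  finally show ?thesis .
qed

theorem proposition3p2:
  fixes d k :: nat
  assumes "odd d" and "d \<ge> 3"
  shows "\<forall>i\<in>{1,2,3}. \<forall>j\<in>{1,2,3}. i \<noteq> j \<longrightarrow>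
           NC0 d k = 3 * NC1 d k i - 3 * NC2 d k i j + NC3 d k"
proof (intro ballI impI)
  fix i j :: nat
  assume ij: "i \<in> {1,2,3}" "j \<in> {1,2,3}" "i \<noteq> j"
  have "NC0 d k = NC1 d k 1 + NC1 d k 2 + NC1 d k 3
                  - NC2 d k 1 2 - NC2 d k 1 3 - NC2 d k 2 3 + NC3 d k"
    using assms by (intro NC0_inclusion_exclusion) simp
  also have "\<dots> = 3 * NC1 d k i - 3 * NC2 d k i j + NC3 d k"
    using NC1_independent[of i d k] NC1_independent[of 2 d k] NC1_independent[of 3 d k]
      NC2_independent[of i j d k] NC2_independent[of 1 3 d k] NC2_independent[of 2 3 d k] ij
    by simp
  finally show "NC0 d k = 3 * NC1 d k i - 3 * NC2 d k i j + NC3 d k" .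
qed

end
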